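(* If $(X,\delta)$ is an $L_1$-embeddable diversity with induced metric $d(a,b)=\delta(\{a,b\})$, then for every finite $A=\{a_1,\dots,a_k\}\subseteq X$ (with $a_i$ distinct), \[ (|A|-1)\,\delta(A)\le\sum_{1\le i<j\le k}d(a_i,a_j). \]
   Context: A diversity on a set $X$ is a function $\delta$ from finite subsets of $X$ to $\mathbb{R}$ with $\delta(A)\ge 0$, $\delta(A)=0$ whenever $|A|\le 1$ (values $0$ on larger sets are allowed), and $\delta(A\cup B)+\delta(B\cup C)\ge\delta(A\cup C)$ for all finite $A,B,C$ with $B\neq\emptyset$. For a measure space $(\Omega,\mathcal{A},\mu)$, the $L_1$ diversity is $(L_1(\Omega,\mu),\delta_1)$ with $\delta_1(F)=\int_\Omega\max\{|f(\omega)-g(\omega)|:f,g\in F\}\,d\mu(\omega)$ for finite $F$. A diversity $(X,\delta)$ is $L_1$-embeddable if there is a map $\phi$ from $X$ into some $L_1$ diversity with $\delta_1(\phi(A))=\delta(A)$ for all finite $A\subseteq X$. *)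

theory Defs
  imports "HOL-Analysis.Analysis"
begin

definition diversity :: "'a set \<Rightarrow> ('a set \<Rightarrow> real) \<Rightarrow> bool" where
  "diversity X \<delta> \<longleftrightarrow>
     (\<forall>A. A \<subseteq> X \<and> finite A \<longrightarrow> \<delta> A \<ge> 0) \<and>
     (\<forall>A. A \<subseteq> X \<and> finite A \<and> card A \<le> 1 \<longrightarrow> \<delta> A = 0) \<and>
     (\<forall>A B C. A \<subseteq> X \<and> B \<subseteq> X \<and> C \<subseteq> X \<and> finite A \<and> finite B \<and> finite C \<and> B \<noteq> {}
        \<longrightarrow> \<delta> (A \<union> C) \<le> \<delta> (A \<union> B) + \<delta> (B \<union> C))"

text \<open>The L1 diversity on integrable functions of a measure space M
  (elements of L1 represented by integrable functions).\<close>
definition L1_diversity :: "'b measure \<Rightarrow> ('b \<Rightarrow> real) set \<Rightarrow> real" where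
  "L1_diversity M F =
     (if F = {} then 0
      else integral\<^sup>L M (\<lambda>\<omega>. Max {\<bar>f \<omega> - g \<omega>\<bar> | f g. f \<in> F \<and> g \<in> F}))"

definition L1_embedding :: "'a set \<Rightarrow> ('a set \<Rightarrow> real) \<Rightarrow> 'b measure \<Rightarrow> ('a \<Rightarrow> 'b \<Rightarrow> real) \<Rightarrow> bool" where
  "L1_embedding X \<delta> M \<phi> \<longleftrightarrow>
     (\<forall>x\<in>X. integrable M (\<phi> x)) \<and>
     (\<forall>A. A \<subseteq> X \<and> finite A \<longrightarrow> L1_diversity M (\<phi> ` A) = \<delta> A)"

definition induced_metric :: "('a set \<Rightarrow> real) \<Rightarrow> 'a \<Rightarrow> 'a \<Rightarrow> real" where
  "induced_metric \<delta> a b = \<delta> {a, b}"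

end

theory Submission
  imports Defs
begin

text \<open>Under an L1 embedding, \<open>\<delta>(A)\<close> is the integral of the pointwise spread
  \<open>max - min\<close> of the values \<open>\<phi>(a) \<omega>\<close>, \<open>a \<in> A\<close>, and each \<open>d(a\<^sub>i, a\<^sub>j)\<close> is the
  integral of \<open>\<bar>\<phi>(a\<^sub>i) \<omega> - \<phi>(a\<^sub>j) \<omega>\<bar>\<close>. So it suffices to show, for real numbers
  \<open>x\<^sub>1, \<dots>, x\<^sub>k\<close>, that \<open>(k - 1) (max x - min x) \<le> \<Sum>\<^sub>i\<^sub><\<^sub>j \<bar>x\<^sub>i - x\<^sub>j\<bar>\<close>, and
  integrate. For the real inequality, adding a point \<open>y\<close> to \<open>k\<close> points enlarges the
  spread by the distance \<open>D\<close> of \<open>y\<close> to their range; the new distances \<open>\<bar>x\<^sub>i - y\<bar>\<close>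
  are each at least \<open>D\<close>, and the two to the extreme points add up to the old spread
  plus \<open>2 D\<close>.\<close>

lemma sum_upper_triangle_Suc:
  fixes f :: "nat \<Rightarrow> nat \<Rightarrow> 'a::comm_monoid_add"
  shows "(\<Sum>i\<in>{1..Suc k}. \<Sum>j\<in>{i<..Suc k}. f i j)
       = (\<Sum>i\<in>{1..k}. \<Sum>j\<in>{i<..k}. f i j) + (\<Sum>i\<in>{1..k}. f i (Suc k))"
proof -
  have "(\<Sum>i\<in>{1..Suc k}. \<Sum>j\<in>{i<..Suc k}. f i j) = (\<Sum>i\<in>{1..k}. \<Sum>j\<in>{i<..Suc k}. f i j)"
    by (simp add: sum.cl_ivl_Suc)
  also have "\<dots> = (\<Sum>i\<in>{1..k}. (\<Sum>j\<in>{i<..k}. f i j) + f i (Suc k))"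
  proof (rule sum.cong)
    fix i assume "i \<in> {1..k}"
    then have "{i<..Suc k} = insert (Suc k) {i<..k}" by auto
    then show "(\<Sum>j\<in>{i<..Suc k}. f i j) = (\<Sum>j\<in>{i<..k}. f i j) + f i (Suc k)"
      by (simp add: add.commute)
  qed simp
  finally show ?thesis by (simp add: sum.distrib)
qed

lemma sum_abs_diff_ge_spread_extension:
  fixes x :: "'i \<Rightarrow> real"
  assumes "finite I" "I \<noteq> {}"
  defines "M \<equiv> Max (x ` I)" and "m \<equiv> Min (x ` I)"
  shows "(M - m) + real (card I) * (max y M - min y m - (M - m)) \<le> (\<Sum>i\<in>I. \<bar>x i - y\<bar>)"
proof -
  define D where "D = max y M - min y m - (M - m)"
  have fin: "finite (x ` I)" "x ` I \<noteq> {}" using assms by auto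
  have range: "m \<le> x i \<and> x i \<le> M" if "i \<in> I" for i
    using that fin by (auto simp: M_def m_def)
  have D_le: "D \<le> \<bar>x i - y\<bar>" if "i \<in> I" for i
    using range[OF that] by (auto simp: D_def)
  obtain p where p: "p \<in> I" "x p = M" using Max_in[OF fin] by (auto simp: M_def)
  obtain q where q: "q \<in> I" "x q = m" using Min_in[OF fin] by (auto simp: m_def)
  show ?thesis
  proof (cases "p = q")
    case True
    then have "M = m" using p q by simp
    moreover have "real (card I) * D \<le> (\<Sum>i\<in>I. \<bar>x i - y\<bar>)"
      using D_le by (intro sum_bounded_below) auto
    ultimately show ?thesis by (simp add: D_def)
  next
    case False
    have extremes: "\<bar>x p - y\<bar> + \<bar>x q - y\<bar> = (M - m) + 2 * D"
      using p q range[OF p(1)] by (auto simp: D_def)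
    have "card {p, q} \<le> card I"
      using p q assms(1) by (intro card_mono) auto
    then have card_rest: "real (card (I - {p, q})) = real (card I) - 2"
      using False p q assms(1) by (simp add: card_Diff_subset of_nat_diff)
    have rest: "real (card (I - {p, q})) * D \<le> (\<Sum>i\<in>I - {p, q}. \<bar>x i - y\<bar>)"
      using D_le by (intro sum_bounded_below) auto
    have "(\<Sum>i\<in>I. \<bar>x i - y\<bar>) = (\<Sum>i\<in>I - {p, q}. \<bar>x i - y\<bar>) + (\<Sum>i\<in>{p, q}. \<bar>x i - y\<bar>)"
      using p q assms(1) by (intro sum.subset_diff) auto
    with False have "(\<Sum>i\<in>I. \<bar>x i - y\<bar>)
        = \<bar>x p - y\<bar> + \<bar>x q - y\<bar> + (\<Sum>i\<in>I - {p, q}. \<bar>x i - y\<bar>)"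
      by simp
    moreover have "real (card I) * D = real (card (I - {p, q})) * D + 2 * D"
      unfolding card_rest by (simp add: algebra_simps)
    ultimately show ?thesis
      using extremes rest unfolding D_def[symmetric] by linarith
  qed
qed

lemma spread_le_sum_pairwise_abs_diff:
  fixes x :: "nat \<Rightarrow> real"
  assumes "1 \<le> k"
  shows "(real k - 1) * (Max (x ` {1..k}) - Min (x ` {1..k}))
           \<le> (\<Sum>i\<in>{1..k}. \<Sum>j\<in>{i<..k}. \<bar>x i - x j\<bar>)"
  using assms
proof (induction k)
  case 0
  then show ?case by simp
next
  case (Suc k)
  show ?case
  proof (cases "k = 0")
    case True
    then show ?thesis by simp
  next
    case False
    define M where "M = Max (x ` {1..k})"
    define m where "m = Min (x ` {1..k})"
    define y where "y = x (Suc k)"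
    have IH: "(real k - 1) * (M - m) \<le> (\<Sum>i\<in>{1..k}. \<Sum>j\<in>{i<..k}. \<bar>x i - x j\<bar>)"
      using Suc.IH False by (simp add: M_def m_def)
    have "x ` {1..Suc k} = insert y (x ` {1..k})"
      by (auto simp: atLeastAtMostSuc_conv y_def)
    then have spread: "Max (x ` {1..Suc k}) - Min (x ` {1..Suc k}) = max y M - min y m"
      using False by (simp add: M_def m_def)
    have new_pairs: "(M - m) + real k * (max y M - min y m - (M - m)) \<le> (\<Sum>i\<in>{1..k}. \<bar>x i - y\<bar>)"
      using sum_abs_diff_ge_spread_extension[of "{1..k}" x y] False
      by (simp add: M_def m_def)
    have "(real (Suc k) - 1) * (max y M - min y m)
        = (real k - 1) * (M - m) + ((M - m) + real k * (max y M - min y m - (M - m)))"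
      by (simp add: algebra_simps)
    moreover have "(\<Sum>i\<in>{1..Suc k}. \<Sum>j\<in>{i<..Suc k}. \<bar>x i - x j\<bar>)
        = (\<Sum>i\<in>{1..k}. \<Sum>j\<in>{i<..k}. \<bar>x i - x j\<bar>) + (\<Sum>i\<in>{1..k}. \<bar>x i - y\<bar>)"
      unfolding sum_upper_triangle_Suc y_def ..
    ultimately show ?thesis
      unfolding spread using IH new_pairs by linarith
  qed
qed

lemma Max_abs_diff_eq_Max_minus_Min:
  fixes x :: "'i \<Rightarrow> real"
  assumes "finite I" "I \<noteq> {}"
  shows "Max {\<bar>x i - x j\<bar> | i j. i \<in> I \<and> j \<in> I} = Max (x ` I) - Min (x ` I)"
proof (rule Max_eqI)
  have "{\<bar>x i - x j\<bar> | i j. i \<in> I \<and> j \<in> I} = (\<lambda>(i, j). \<bar>x i - x j\<bar>) ` (I \<times> I)" by auto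
  then show "finite {\<bar>x i - x j\<bar> | i j. i \<in> I \<and> j \<in> I}" using assms by simp
next
  fix z assume "z \<in> {\<bar>x i - x j\<bar> | i j. i \<in> I \<and> j \<in> I}"
  then obtain i j where ij: "i \<in> I" "j \<in> I" "z = \<bar>x i - x j\<bar>" by blast
  have "x i \<le> Max (x ` I)" "x j \<le> Max (x ` I)" "Min (x ` I) \<le> x i" "Min (x ` I) \<le> x j"
    using ij assms by auto
  then show "z \<le> Max (x ` I) - Min (x ` I)" using ij by linarith
next
  have fin: "finite (x ` I)" "x ` I \<noteq> {}" using assms by auto
  obtain p where p: "p \<in> I" "x p = Max (x ` I)" using Max_in[OF fin] by auto
  obtain q where q: "q \<in> I" "x q = Min (x ` I)" using Min_in[OF fin] by auto
  have "Min (x ` I) \<le> Max (x ` I)" using Min_le[OF fin(1) imageI[OF p(1)]] p(2) by simp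
  then have "Max (x ` I) - Min (x ` I) = \<bar>x p - x q\<bar>" using p q by simp
  then show "Max (x ` I) - Min (x ` I) \<in> {\<bar>x i - x j\<bar> | i j. i \<in> I \<and> j \<in> I}"
    using p q by blast
qed

lemma L1_diversity_image:
  fixes f :: "'i \<Rightarrow> 'b \<Rightarrow> real"
  assumes "finite I" "I \<noteq> {}"
  shows "L1_diversity M (f ` I)
           = integral\<^sup>L M (\<lambda>\<omega>. Max ((\<lambda>i. f i \<omega>) ` I) - Min ((\<lambda>i. f i \<omega>) ` I))"
proof -
  have "{\<bar>g \<omega> - h \<omega>\<bar> | g h. g \<in> f ` I \<and> h \<in> f ` I}
      = {\<bar>f i \<omega> - f j \<omega>\<bar> | i j. i \<in> I \<and> j \<in> I}" for \<omega>
    by blast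
  then show ?thesis
    using assms Max_abs_diff_eq_Max_minus_Min[OF assms, of "\<lambda>i. f i _"]
    by (simp add: L1_diversity_def)
qed

lemma L1_diversity_pair: "L1_diversity M {u, v} = integral\<^sup>L M (\<lambda>\<omega>. \<bar>u \<omega> - v \<omega>\<bar>)"
proof -
  have "(\<lambda>\<omega>. max (u \<omega>) (v \<omega>) - min (u \<omega>) (v \<omega>)) = (\<lambda>\<omega>. \<bar>u \<omega> - v \<omega>\<bar>)"
    by (auto simp: max_def min_def)
  then show ?thesis
    using L1_diversity_image[of "{u, v}" M "\<lambda>g. g"] by simp
qed

lemma integral_scaled_le_integral:
  fixes f g :: "'b \<Rightarrow> real"
  assumes "integrable M g" "\<And>\<omega>. c * f \<omega> \<le> g \<omega>" "\<And>\<omega>. 0 \<le> g \<omega>"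
  shows "c * integral\<^sup>L M f \<le> integral\<^sup>L M g"
proof (cases "integrable M f")
  case True
  then have "c * integral\<^sup>L M f = integral\<^sup>L M (\<lambda>\<omega>. c * f \<omega>)" by simp
  also have "\<dots> \<le> integral\<^sup>L M g"
    using True assms by (intro integral_mono) auto
  finally show ?thesis .
next
  case False
  then show ?thesis using assms(3) by (simp add: not_integrable_integral_eq)
qed

lemma integral_double_sum:
  fixes f :: "'i \<Rightarrow> 'j \<Rightarrow> 'b \<Rightarrow> real"
  assumes "\<And>i j. i \<in> I \<Longrightarrow> j \<in> J i \<Longrightarrow> integrable M (f i j)"
  shows "integral\<^sup>L M (\<lambda>\<omega>. \<Sum>i\<in>I. \<Sum>j\<in>J i. f i j \<omega>) = (\<Sum>i\<in>I. \<Sum>j\<in>J i. integral\<^sup>L M (f i j))"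
proof -
  have "integral\<^sup>L M (\<lambda>\<omega>. \<Sum>i\<in>I. \<Sum>j\<in>J i. f i j \<omega>) = (\<Sum>i\<in>I. integral\<^sup>L M (\<lambda>\<omega>. \<Sum>j\<in>J i. f i j \<omega>))"
    using assms by (intro Bochner_Integration.integral_sum Bochner_Integration.integrable_sum) auto
  also have "\<dots> = (\<Sum>i\<in>I. \<Sum>j\<in>J i. integral\<^sup>L M (f i j))"
    using assms by (intro sum.cong refl Bochner_Integration.integral_sum) auto
  finally show ?thesis .
qed

lemma L1_embedding_eq:
  assumes "L1_embedding X \<delta> M \<phi>" "A \<subseteq> X" "finite A"
  shows "\<delta> A = L1_diversity M (\<phi> ` A)"
  using assms by (simp add: L1_embedding_def)

lemma L1_embedding_induced_metric:
  assumes "L1_embedding X \<delta> M \<phi>" "x \<in> X" "y \<in> X"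
  shows "induced_metric \<delta> x y = integral\<^sup>L M (\<lambda>\<omega>. \<bar>\<phi> x \<omega> - \<phi> y \<omega>\<bar>)"
  using L1_embedding_eq[OF assms(1), of "{x, y}"] assms(2,3)
  by (simp add: induced_metric_def L1_diversity_pair)

lemma L1_embedding_spread:
  assumes "L1_embedding X \<delta> M \<phi>" "a ` I \<subseteq> X" "finite I" "I \<noteq> {}"
  shows "\<delta> (a ` I) = integral\<^sup>L M (\<lambda>\<omega>. Max ((\<lambda>i. \<phi> (a i) \<omega>) ` I) - Min ((\<lambda>i. \<phi> (a i) \<omega>) ` I))"
proof -
  have "\<delta> (a ` I) = L1_diversity M ((\<lambda>i. \<phi> (a i)) ` I)"
    using L1_embedding_eq[OF assms(1,2)] assms(3) by (simp add: image_image)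
  also have "\<dots> = integral\<^sup>L M (\<lambda>\<omega>. Max ((\<lambda>i. \<phi> (a i) \<omega>) ` I) - Min ((\<lambda>i. \<phi> (a i) \<omega>) ` I))"
    using assms(3,4) by (rule L1_diversity_image)
  finally show ?thesis .
qed

theorem proposition6:
  fixes X :: "'a set" and \<delta> :: "'a set \<Rightarrow> real"
    and M :: "'b measure" and \<phi> :: "'a \<Rightarrow> 'b \<Rightarrow> real"
    and a :: "nat \<Rightarrow> 'a" and k :: nat
  assumes "diversity X \<delta>"
    and "L1_embedding X \<delta> M \<phi>"
    and "a ` {1..k} \<subseteq> X"
    and "inj_on a {1..k}"
  shows "(real (card (a ` {1..k})) - 1) * \<delta> (a ` {1..k})
           \<le> (\<Sum>i\<in>{1..k}. \<Sum>j\<in>{i<..k}. induced_metric \<delta> (a i) (a j))"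
proof (cases "k = 0")
  case True
  then show ?thesis using L1_embedding_eq[OF assms(2), of "{}"] by (simp add: L1_diversity_def)
next
  case False
  have aX: "a i \<in> X" if "i \<in> {1..k}" for i
    using assms(3) that by auto
  define d where "d i j = (\<lambda>\<omega>. \<bar>\<phi> (a i) \<omega> - \<phi> (a j) \<omega>\<bar>)" for i j
  have d_integrable: "integrable M (d i j)" if "i \<in> {1..k}" "j \<in> {i<..k}" for i j
    using that aX assms(2) unfolding d_def L1_embedding_def
    by (intro integrable_abs Bochner_Integration.integrable_diff) auto
  define s where "s \<omega> = Max ((\<lambda>i. \<phi> (a i) \<omega>) ` {1..k}) - Min ((\<lambda>i. \<phi> (a i) \<omega>) ` {1..k})" for \<omega>
  have \<delta>_spread: "\<delta> (a ` {1..k}) = integral\<^sup>L M s"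
    unfolding s_def using False by (intro L1_embedding_spread[OF assms(2,3)]) auto
  have pointwise: "(real k - 1) * s \<omega> \<le> (\<Sum>i\<in>{1..k}. \<Sum>j\<in>{i<..k}. d i j \<omega>)" for \<omega>
    using spread_le_sum_pairwise_abs_diff[of k "\<lambda>i. \<phi> (a i) \<omega>"] False by (simp add: s_def d_def)
  have "integrable M (\<lambda>\<omega>. \<Sum>i\<in>{1..k}. \<Sum>j\<in>{i<..k}. d i j \<omega>)"
    using d_integrable by (intro Bochner_Integration.integrable_sum) auto
  then have "(real k - 1) * \<delta> (a ` {1..k}) \<le> integral\<^sup>L M (\<lambda>\<omega>. \<Sum>i\<in>{1..k}. \<Sum>j\<in>{i<..k}. d i j \<omega>)"
    unfolding \<delta>_spread by (rule integral_scaled_le_integral[OF _ pointwise]) (simp add: d_def sum_nonneg)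
  also have "\<dots> = (\<Sum>i\<in>{1..k}. \<Sum>j\<in>{i<..k}. integral\<^sup>L M (d i j))"
    by (rule integral_double_sum) (rule d_integrable)
  also have "\<dots> = (\<Sum>i\<in>{1..k}. \<Sum>j\<in>{i<..k}. induced_metric \<delta> (a i) (a j))"
    using aX by (intro sum.cong refl) (simp add: L1_embedding_induced_metric[OF assms(2)] d_def)
  finally show ?thesis
    using assms(4) by (simp add: card_image)
qed

end
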